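(* Let $A$ be a nondegenerate observable of a finite-dimensional quantum system with eigenvalues $a_k$ and eigenvectors $|\varphi_k\rangle$, let $a_0=\min\{a_k-a_l: a_k>a_l\}$, and let $\hbar,\alpha,g_0,\lambda>0$. Let $\psi_{Pr},\Phi_{Po}\in L^2(\mathbb{R})$ be normalized, and for $t>0$ and $k\neq l$ define $$D_{kl}(t)=\int_{-\infty}^{\infty}e^{-\frac{i\lambda}{\hbar}(a_k-a_l)b}|\Phi_{Po}(b)|^2\,db\;\int_{-\infty}^{\infty}e^{-\frac{i}{\hbar}\alpha g_0 t(a_k-a_l)q}|\psi_{Pr}(q)|^2\,dq,$$ so that the reduced density matrix of the system is $\rho_{\mathcal S}(t)=\sum_{k,l}\langle\varphi_k|\psi_{\mathcal S}\rangle\langle\psi_{\mathcal S}|\varphi_l\rangle D_{kl}(t)|\varphi_k\rangle\langle\varphi_l|$ (with $D_{kk}=1$). Then: (a) if $\psi_{Pr}$ is momentum-limited of type $\kappa_0>0$, then $D_{kl}(t)=0$ for all $k\neq l$ and all $t>\frac{2\kappa_0\hbar}{\alpha g_0 a_0}$; (b) if $\Phi_{Po}$ is momentum-limited of type $b_0>0$ and $\lambda>\frac{2b_0\hbar}{a_0}$, then $D_{kl}(t)=0$ for all $k\neq l$ and all $t>0$. Hence in either case $\rho_{\mathcal S}$ is exactly diagonal in the eigenbasis of $A$.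
   Context: A function $\psi\in L^2(\mathbb{R})$ is momentum-limited of type $\kappa_0>0$ if $\psi(q)=\int_{-\hbar\kappa_0}^{\hbar\kappa_0}e^{ipq/\hbar}\tilde\psi(p)\,dp$ for some $\tilde\psi\in L^2(-\hbar\kappa_0,\hbar\kappa_0)$. Here $\lambda$ is the effective system–pointer coupling constant. *)

theory Defs
  imports "HOL-Analysis.Analysis"
begin

definition normalized_L2 :: "(real \<Rightarrow> complex) \<Rightarrow> bool" where
  "normalized_L2 f \<longleftrightarrow> f \<in> borel_measurable lborel
     \<and> integrable lborel (\<lambda>x. (cmod (f x))\<^sup>2)
     \<and> (\<integral>x. (cmod (f x))\<^sup>2 \<partial>lborel) = 1"

text \<open>Momentum-limited of type kappa0: psi(q) = int_{-hbar kappa0}^{hbar kappa0} e^{i p q/hbar} psit(p) dp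
  for some psit in L^2(-hbar kappa0, hbar kappa0); equality of L^2 elements, i.e. almost everywhere.\<close>
definition momentum_limited :: "real \<Rightarrow> real \<Rightarrow> (real \<Rightarrow> complex) \<Rightarrow> bool" where
  "momentum_limited hbar \<kappa>0 \<psi> \<longleftrightarrow>
     (\<exists>\<psi>t :: real \<Rightarrow> complex.
        set_borel_measurable lborel {-hbar*\<kappa>0 <..< hbar*\<kappa>0} \<psi>t
      \<and> set_integrable lborel {-hbar*\<kappa>0 <..< hbar*\<kappa>0} (\<lambda>p. (cmod (\<psi>t p))\<^sup>2)
      \<and> (AE q in lborel. \<psi> q =
            (LINT p : {-hbar*\<kappa>0 <..< hbar*\<kappa>0} | lborel. cis (p * q / hbar) * \<psi>t p)))"

definition decoh :: "real \<Rightarrow> real \<Rightarrow> real \<Rightarrow> real \<Rightarrow> (real \<Rightarrow> complex) \<Rightarrow> (real \<Rightarrow> complex)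
    \<Rightarrow> (nat \<Rightarrow> real) \<Rightarrow> nat \<Rightarrow> nat \<Rightarrow> real \<Rightarrow> complex" where
  "decoh hbar \<alpha> g0 lam \<psi>Pr \<Phi>Po a k l t =
     (LINT b | lborel. cis (- (lam / hbar) * (a k - a l) * b) * complex_of_real ((cmod (\<Phi>Po b))\<^sup>2))
   * (LINT q | lborel. cis (- (1 / hbar) * \<alpha> * g0 * t * (a k - a l) * q) * complex_of_real ((cmod (\<psi>Pr q))\<^sup>2))"

text \<open>Matrix entries of the reduced density matrix in the eigenbasis of A;
  c k = <phi_k|psi_S> are the coefficients of the system state.\<close>
definition rho_S :: "real \<Rightarrow> real \<Rightarrow> real \<Rightarrow> real \<Rightarrow> (real \<Rightarrow> complex) \<Rightarrow> (real \<Rightarrow> complex)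
    \<Rightarrow> (nat \<Rightarrow> real) \<Rightarrow> (nat \<Rightarrow> complex) \<Rightarrow> real \<Rightarrow> nat \<Rightarrow> nat \<Rightarrow> complex" where
  "rho_S hbar \<alpha> g0 lam \<psi>Pr \<Phi>Po a c t k l =
     c k * cnj (c l) * (if k = l then 1 else decoh hbar \<alpha> g0 lam \<psi>Pr \<Phi>Po a k l t)"

definition min_gap :: "nat \<Rightarrow> (nat \<Rightarrow> real) \<Rightarrow> real" where
  "min_gap n a = Min {a k - a l | k l. k < n \<and> l < n \<and> a l < a k}"

end

theory Submission
  imports Defs "HOL-Probability.Probability" "HOL-Real_Asymp.Real_Asymp"
begin

text \<open>A momentum-limited \<open>\<psi>\<close> is (a.e.) the Fourier integral \<open>F\<close> of a function \<open>f\<close> supported in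
  \<open>]-\<hbar>\<kappa>, \<hbar>\<kappa>[\<close>. Then \<open>\<bar>\<psi>\<bar>\<^sup>2 = F \<cdot> cnj F\<close> is the Fourier integral of the autocorrelation of \<open>f\<close>,
  which is supported in \<open>]-2\<hbar>\<kappa>, 2\<hbar>\<kappa>[\<close>, so the Fourier transform of \<open>\<bar>\<psi>\<bar>\<^sup>2\<close> vanishes at
  every frequency \<open>\<omega>\<close> with \<open>\<bar>\<omega>\<bar> > 2\<kappa>\<close>. Both factors of \<open>D\<^sub>k\<^sub>l(t)\<close> are such transforms, at the
  frequencies \<open>\<alpha> g\<^sub>0 t (a\<^sub>k - a\<^sub>l)/\<hbar>\<close> and \<open>\<lambda> (a\<^sub>k - a\<^sub>l)/\<hbar>\<close>; since \<open>\<bar>a\<^sub>k - a\<^sub>l\<bar> \<ge> a\<^sub>0\<close>, the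
  hypotheses push them beyond the band. As the integrals involved need not converge absolutely,
  \<open>\<bar>\<psi>\<bar>\<^sup>2\<close> is first damped by a Gaussian, Fubini is applied, and the damping is removed by dominated
  convergence.\<close>

lemma borel_measurable_cis [measurable]: "cis \<in> borel_measurable borel"
  by (intro borel_measurable_continuous_onI continuous_intros)

definition gaussian :: "real \<Rightarrow> real \<Rightarrow> real" where
  "gaussian c x = exp (- ((c * x)\<^sup>2) / 2)"

definition fourier_integral :: "real \<Rightarrow> (real \<Rightarrow> complex) \<Rightarrow> real \<Rightarrow> complex" where
  "fourier_integral r f q = (LINT p|lborel. cis (p * q * r) * f p)"

lemma borel_measurable_gaussian [measurable]: "gaussian c \<in> borel_measurable borel"
  unfolding gaussian_def[abs_def] by measurable

lemma gaussian_pos: "0 < gaussian c x"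
  by (simp add: gaussian_def)

lemma gaussian_le_1: "gaussian c x \<le> 1"
  by (simp add: gaussian_def)

lemma gaussian_antimono: "\<bar>x\<bar> \<le> \<bar>y\<bar> \<Longrightarrow> gaussian c y \<le> gaussian c x"
  by (simp add: gaussian_def power_mult_distrib abs_le_square_iff mult_left_mono)

lemma integrable_gaussian: "c > 0 \<Longrightarrow> integrable lborel (gaussian c)"
proof -
  assume c: "c > 0"
  have "integrable lborel (\<lambda>q. std_normal_density (0 + c * q))"
    using c by (intro lborel_integrable_real_affine) auto
  then have "integrable lborel (\<lambda>q. sqrt (2 * pi) * std_normal_density (0 + c * q))"
    by simp
  then show ?thesis
    by (simp add: std_normal_density_def gaussian_def [abs_def])
qed

text \<open>The Fourier transform of the Gaussian is read off from the characteristic function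
  of the standard normal distribution.\<close>
lemma fourier_integral_gaussian:
  assumes c: "c > 0"
  shows "fourier_integral 1 (\<lambda>q. complex_of_real (gaussian c q)) s
    = complex_of_real (sqrt (2 * pi) / c * gaussian (1 / c) s)"
proof -
  have "complex_of_real (gaussian 1 (s / c)) = char std_normal_distribution (s / c)"
    by (simp add: char_std_normal_distribution gaussian_def)
  also have "\<dots> = (LINT x|lborel. std_normal_density x *\<^sub>R iexp (s / c * x))"
    unfolding char_def by (subst integral_density) (auto simp: normal_density_nonneg)
  also have "\<dots> = c *\<^sub>R (LINT q|lborel. std_normal_density (0 + c * q) *\<^sub>R iexp (s / c * (0 + c * q)))"
    using c by (subst lborel_integral_real_affine[where c = c and t = 0]) auto
  also have "(\<lambda>q. std_normal_density (0 + c * q) *\<^sub>R iexp (s / c * (0 + c * q)))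
     = (\<lambda>q. complex_of_real (1 / sqrt (2 * pi)) * (cis (q * s * 1) * complex_of_real (gaussian c q)))"
    using c by (auto simp: std_normal_density_def gaussian_def cis_conv_exp scaleR_conv_of_real mult_ac)
  finally show ?thesis
    using c by (simp add: fourier_integral_def scaleR_conv_of_real gaussian_def field_simps)
qed

lemma fourier_integral_gaussian_modulated:
  assumes c: "c > 0"
  shows "fourier_integral r (\<lambda>q. complex_of_real (gaussian c q) * cis (s * q)) p
    = complex_of_real (sqrt (2 * pi) / c * gaussian (1 / c) (p * r + s))"
proof -
  have "fourier_integral r (\<lambda>q. complex_of_real (gaussian c q) * cis (s * q)) p
      = fourier_integral 1 (\<lambda>q. complex_of_real (gaussian c q)) (p * r + s)"
    unfolding fourier_integral_def
    by (intro Bochner_Integration.integral_cong refl) (simp add: cis_mult algebra_simps)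
  then show ?thesis
    using fourier_integral_gaussian[OF c] by simp
qed

lemma borel_measurable_fourier_integral [measurable]:
  assumes "integrable lborel f"
  shows "fourier_integral r f \<in> borel_measurable lborel"
proof -
  have [measurable]: "f \<in> borel_measurable lborel"
    using assms by (rule borel_measurable_integrable)
  show ?thesis
    unfolding fourier_integral_def[abs_def]
    by (rule lborel.borel_measurable_lebesgue_integral) measurable
qed

lemma norm_fourier_integral_le: "norm (fourier_integral r f q) \<le> (LINT p|lborel. norm (f p))"
proof -
  have "norm (fourier_integral r f q) \<le> (LINT p|lborel. norm (cis (p * q * r) * f p))"
    unfolding fourier_integral_def by (rule integral_norm_bound)
  then show ?thesis
    by (simp add: norm_mult)
qed

lemma cnj_fourier_integral: "cnj (fourier_integral r f q) = fourier_integral (- r) (\<lambda>p. cnj (f p)) q"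
  unfolding fourier_integral_def
  by (subst Bochner_Integration.integral_cnj[symmetric])
     (intro Bochner_Integration.integral_cong refl; simp add: cis_cnj)

lemma integrable_mult_fourier_integral:
  assumes k: "integrable lborel k" and u: "integrable lborel u"
  shows "integrable lborel (\<lambda>q. k q * fourier_integral r u q)"
proof (rule Bochner_Integration.integrable_bound)
  show "integrable lborel (\<lambda>q. (LINT p|lborel. norm (u p)) *\<^sub>R k q)"
    using k by simp
  show "(\<lambda>q. k q * fourier_integral r u q) \<in> borel_measurable lborel"
    using k u by (measurable; rule borel_measurable_integrable)
  show "AE q in lborel. norm (k q * fourier_integral r u q) \<le> norm ((LINT p|lborel. norm (u p)) *\<^sub>R k q)"
    using norm_fourier_integral_le[of r u]
    by (intro AE_I2) (auto simp: norm_mult mult.commute intro: mult_left_mono)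
qed

lemma integral_mult_fourier_integral_swap:
  assumes k: "integrable lborel k" and u: "integrable lborel u"
  shows "(LINT q|lborel. k q * fourier_integral r u q) = (LINT p|lborel. u p * fourier_integral r k p)"
proof -
  have [measurable]: "k \<in> borel_measurable lborel" "u \<in> borel_measurable lborel"
    using k u by (auto dest: borel_measurable_integrable)
  have lborel_pair: "pair_sigma_finite lborel lborel"
    by (simp add: pair_sigma_finite_def lborel.sigma_finite_measure_axioms)
  let ?f = "\<lambda>(q, p). k q * (cis (p * q * r) * u p)"
  have integrable_product: "integrable (lborel \<Otimes>\<^sub>M lborel) ?f"
  proof (rule pair_sigma_finite.Fubini_integrable[OF lborel_pair])
    show "integrable lborel (\<lambda>q. LINT p|lborel. norm (?f (q, p)))"
      by (simp add: norm_mult integrable_mult_left integrable_norm[OF u] k)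
    have "integrable lborel (\<lambda>p. cis (p * q * r) * u p)" for q
      by (rule Bochner_Integration.integrable_bound[OF u]) (auto simp: norm_mult)
    then show "AE q in lborel. integrable lborel (\<lambda>p. ?f (q, p))"
      by (simp add: Bochner_Integration.integrable_mult_right)
  qed measurable
  have "(LINT q|lborel. LINT p|lborel. ?f (q, p)) = (LINT p|lborel. LINT q|lborel. ?f (q, p))"
    using pair_sigma_finite.Fubini_integral[OF lborel_pair integrable_product] by simp
  then show ?thesis
    by (simp add: fourier_integral_def mult_ac flip: integral_mult_right_zero integral_mult_left_zero)
qed

lemma integrable_gaussian_modulated:
  "c > 0 \<Longrightarrow> integrable lborel (\<lambda>q. complex_of_real (gaussian c q) * cis (s * q))"
  by (rule Bochner_Integration.integrable_bound[OF integrable_gaussian])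
     (auto simp: norm_mult gaussian_pos less_imp_le)

lemma integral_gaussian_mult_fourier_integral:
  assumes c: "c > 0" and u: "integrable lborel u"
  shows "(LINT q|lborel. complex_of_real (gaussian c q) * cis (s * q) * fourier_integral r u q)
    = (LINT p|lborel. u p * complex_of_real (sqrt (2 * pi) / c * gaussian (1 / c) (p * r + s)))"
  using integral_mult_fourier_integral_swap[OF integrable_gaussian_modulated[OF c, of s] u, where r = r]
  by (simp add: fourier_integral_gaussian_modulated[OF c])

text \<open>The Gaussian damping makes every integral absolutely convergent, so Fubini applies twice.\<close>
lemma integral_gaussian_mult_sq_fourier_integral:
  assumes c: "c > 0" and f: "integrable lborel f"
  shows "(LINT q|lborel. complex_of_real (gaussian c q)
            * (cis (s * q) * complex_of_real ((cmod (fourier_integral r f q))\<^sup>2)))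
    = (LINT p|lborel. f p * (LINT p'|lborel. cnj (f p')
            * complex_of_real (sqrt (2 * pi) / c * gaussian (1 / c) ((p - p') * r + s))))"
proof -
  define g where "g q = complex_of_real (gaussian c q) * cis (s * q)" for q
  define Fc where "Fc = fourier_integral (- r) (\<lambda>p. cnj (f p))"
  have cnj_f: "integrable lborel (\<lambda>p. cnj (f p))"
    using f by simp
  have "(LINT q|lborel. g q * complex_of_real ((cmod (fourier_integral r f q))\<^sup>2))
      = (LINT q|lborel. (g q * Fc q) * fourier_integral r f q)"
    by (simp only: complex_norm_square) (simp add: cnj_fourier_integral Fc_def mult_ac)
  also have "\<dots> = (LINT p|lborel. f p * fourier_integral r (\<lambda>q. g q * Fc q) p)"
    unfolding Fc_def g_def
    by (intro integral_mult_fourier_integral_swap integrable_mult_fourier_integral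
        integrable_gaussian_modulated c cnj_f f)
  also have "\<dots> = (LINT p|lborel. f p * (LINT p'|lborel. cnj (f p')
            * complex_of_real (sqrt (2 * pi) / c * gaussian (1 / c) ((p - p') * r + s))))"
  proof (intro Bochner_Integration.integral_cong refl arg_cong[where f = "\<lambda>z. f _ * z"])
    fix p
    have "fourier_integral r (\<lambda>q. g q * Fc q) p
        = (LINT q|lborel. complex_of_real (gaussian c q) * cis ((p * r + s) * q) * Fc q)"
      unfolding fourier_integral_def[of r] g_def
      by (intro Bochner_Integration.integral_cong refl) (simp add: cis_mult algebra_simps)
    also have "\<dots> = (LINT p'|lborel. cnj (f p')
        * complex_of_real (sqrt (2 * pi) / c * gaussian (1 / c) (p' * - r + (p * r + s))))"
      unfolding Fc_def by (rule integral_gaussian_mult_fourier_integral[OF c cnj_f])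
    finally show "fourier_integral r (\<lambda>q. g q * Fc q) p = (LINT p'|lborel. cnj (f p')
        * complex_of_real (sqrt (2 * pi) / c * gaussian (1 / c) ((p - p') * r + s)))"
      by (simp add: algebra_simps)
  qed
  finally show ?thesis
    by (simp add: g_def mult.assoc)
qed

lemma norm_integral_mult_integral_cnj_le:
  fixes f :: "real \<Rightarrow> complex"
  assumes f: "integrable lborel f" and M: "0 \<le> M"
    and K: "\<And>p p'. f p \<noteq> 0 \<Longrightarrow> f p' \<noteq> 0 \<Longrightarrow> norm (K p p') \<le> M"
  shows "norm (LINT p|lborel. f p * (LINT p'|lborel. cnj (f p') * K p p'))
    \<le> (LINT p|lborel. norm (f p))\<^sup>2 * M"
proof -
  define N where "N = (LINT p|lborel. norm (f p))"
  have N: "0 \<le> N"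
    unfolding N_def by simp
  have inner: "norm (LINT p'|lborel. cnj (f p') * K p p') \<le> N * M" if "f p \<noteq> 0" for p
  proof -
    have "norm (LINT p'|lborel. cnj (f p') * K p p') \<le> (LINT p'|lborel. norm (cnj (f p') * K p p'))"
      by (rule integral_norm_bound)
    also have "\<dots> \<le> (LINT p'|lborel. norm (f p') * M)"
    proof (intro integral_mono')
      show "norm (cnj (f p') * K p p') \<le> norm (f p') * M" for p'
        using K[OF that, of p'] by (cases "f p' = 0") (auto simp: norm_mult intro: mult_left_mono)
    qed (use f M in auto)
    finally show ?thesis
      by (simp add: N_def)
  qed
  have "norm (LINT p|lborel. f p * (LINT p'|lborel. cnj (f p') * K p p'))
      \<le> (LINT p|lborel. norm (f p * (LINT p'|lborel. cnj (f p') * K p p')))"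
    by (rule integral_norm_bound)
  also have "\<dots> \<le> (LINT p|lborel. norm (f p) * (N * M))"
  proof (intro integral_mono')
    show "norm (f p * (LINT p'|lborel. cnj (f p') * K p p')) \<le> norm (f p) * (N * M)" for p
      using inner[of p] by (cases "f p = 0") (auto simp: norm_mult intro: mult_left_mono)
  qed (use f M N in auto)
  finally show ?thesis
    by (simp add: N_def power2_eq_square mult_ac)
qed

lemma tendsto_integral_gaussian_damped:
  fixes h :: "real \<Rightarrow> complex"
  assumes h: "integrable lborel h"
  shows "(\<lambda>n. LINT q|lborel. complex_of_real (gaussian (1 / real (Suc n)) q) * h q)
    \<longlonglongrightarrow> (LINT q|lborel. h q)"
proof (rule integral_dominated_convergence[where w = "\<lambda>q. norm (h q)"])
  have [measurable]: "h \<in> borel_measurable lborel"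
    using h by (rule borel_measurable_integrable)
  show "h \<in> borel_measurable lborel"
    by measurable
  show "(\<lambda>q. complex_of_real (gaussian (1 / real (Suc n)) q) * h q) \<in> borel_measurable lborel" for n
    by measurable
  show "integrable lborel (\<lambda>q. norm (h q))"
    using h by simp
  show "AE q in lborel. norm (complex_of_real (gaussian (1 / real (Suc n)) q) * h q) \<le> norm (h q)" for n
    by (intro AE_I2) (simp add: norm_mult abs_of_pos[OF gaussian_pos]
        mult_left_le_one_le[OF norm_ge_zero less_imp_le[OF gaussian_pos] gaussian_le_1])
  have "(\<lambda>n. 1 / real (Suc n)) \<longlonglongrightarrow> 0"
    by real_asymp
  then have "(\<lambda>n. gaussian (1 / real (Suc n)) q) \<longlonglongrightarrow> gaussian 0 q" for q
    unfolding gaussian_def by (intro tendsto_intros) auto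
  then have "(\<lambda>n. complex_of_real (gaussian (1 / real (Suc n)) q) * h q)
      \<longlonglongrightarrow> complex_of_real (gaussian 0 q) * h q" for q
    by (intro tendsto_intros)
  then show "AE q in lborel. (\<lambda>n. complex_of_real (gaussian (1 / real (Suc n)) q) * h q) \<longlonglongrightarrow> h q"
    by (simp add: gaussian_def)
qed

text \<open>The damped integrals are bounded by \<open>\<parallel>f\<parallel>\<^sub>1\<^sup>2\<close> times the transformed Gaussian at distance
  \<open>\<bar>\<omega>\<bar> - 2 B r\<close> from the band, which tends to \<open>0\<close> as the damping is removed.\<close>
lemma band_limited_intensity_fourier_eq_0:
  fixes f :: "real \<Rightarrow> complex"
  assumes r: "r > 0" and f: "integrable lborel f"
    and supp: "\<And>p. f p \<noteq> 0 \<Longrightarrow> \<bar>p\<bar> < B"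
    and \<omega>: "2 * B * r < \<bar>\<omega>\<bar>"
    and intensity: "integrable lborel (\<lambda>q. (cmod (fourier_integral r f q))\<^sup>2)"
  shows "(LINT q|lborel. cis (- \<omega> * q) * complex_of_real ((cmod (fourier_integral r f q))\<^sup>2)) = 0"
proof -
  define F where "F = fourier_integral r f"
  define h where "h q = cis (- \<omega> * q) * complex_of_real ((cmod (F q))\<^sup>2)" for q
  define \<delta> where "\<delta> = \<bar>\<omega>\<bar> - 2 * B * r"
  define N where "N = (LINT p|lborel. norm (f p))"
  define M where "M c = sqrt (2 * pi) / c * gaussian (1 / c) \<delta>" for c
  have \<delta>: "0 < \<delta>"
    using \<omega> by (simp add: \<delta>_def)
  have kernel_le: "norm (complex_of_real (sqrt (2 * pi) / c * gaussian (1 / c) ((p - p') * r + - \<omega>)))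
      \<le> M c" if c: "c > 0" and "f p \<noteq> 0" "f p' \<noteq> 0" for c p p'
  proof -
    have "\<bar>p - p'\<bar> * r < 2 * B * r"
      using supp[OF \<open>f p \<noteq> 0\<close>] supp[OF \<open>f p' \<noteq> 0\<close>] r by (intro mult_strict_right_mono) auto
    then have "\<bar>(p - p') * r\<bar> < 2 * B * r"
      using r by (simp add: abs_mult)
    then have "\<bar>\<delta>\<bar> \<le> \<bar>(p - p') * r + - \<omega>\<bar>"
      using \<delta> unfolding \<delta>_def by arith
    then have "gaussian (1 / c) ((p - p') * r + - \<omega>) \<le> gaussian (1 / c) \<delta>"
      by (rule gaussian_antimono)
    then have "sqrt (2 * pi) / c * gaussian (1 / c) ((p - p') * r + - \<omega>) \<le> M c"
      unfolding M_def using c by (intro mult_left_mono) auto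
    moreover have "0 \<le> sqrt (2 * pi) / c * gaussian (1 / c) ((p - p') * r + - \<omega>)"
      using c by (simp add: less_imp_le[OF gaussian_pos])
    ultimately show ?thesis
      by (simp only: norm_of_real abs_of_nonneg)
  qed
  have damped_le: "norm (LINT q|lborel. complex_of_real (gaussian c q) * h q) \<le> N\<^sup>2 * M c"
    if c: "c > 0" for c
    unfolding h_def F_def integral_gaussian_mult_sq_fourier_integral[OF c f] N_def
    using c by (intro norm_integral_mult_integral_cnj_le[OF f] kernel_le)
               (auto simp: M_def less_imp_le[OF gaussian_pos])
  have "(\<lambda>n. M (1 / real (Suc n))) \<longlonglongrightarrow> 0"
    using \<delta> unfolding M_def gaussian_def by real_asymp
  then have "(\<lambda>n. N\<^sup>2 * M (1 / real (Suc n))) \<longlonglongrightarrow> 0"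
    by (rule tendsto_mult_right_zero)
  then have damped_to_0:
    "(\<lambda>n. LINT q|lborel. complex_of_real (gaussian (1 / real (Suc n)) q) * h q) \<longlonglongrightarrow> 0"
    by (rule Lim_null_comparison[rotated]) (intro always_eventually allI damped_le, simp)
  have "integrable lborel h"
  proof (rule Bochner_Integration.integrable_bound[OF intensity])
    show "h \<in> borel_measurable lborel"
      unfolding h_def F_def using f by measurable
  qed (simp add: h_def F_def norm_mult del: of_real_power)
  then have "(\<lambda>n. LINT q|lborel. complex_of_real (gaussian (1 / real (Suc n)) q) * h q)
      \<longlonglongrightarrow> (LINT q|lborel. h q)"
    by (rule tendsto_integral_gaussian_damped)
  from LIMSEQ_unique[OF this damped_to_0] show ?thesis
    by (simp add: h_def F_def)
qed

lemma momentum_limited_intensity_fourier_eq_0: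
  fixes \<psi> :: "real \<Rightarrow> complex"
  assumes hbar: "hbar > 0" and ml: "momentum_limited hbar \<kappa> \<psi>"
    and [measurable]: "\<psi> \<in> borel_measurable lborel"
    and intensity: "integrable lborel (\<lambda>q. (cmod (\<psi> q))\<^sup>2)"
    and \<omega>: "2 * \<kappa> < \<bar>\<omega>\<bar>"
  shows "(LINT q|lborel. cis (- \<omega> * q) * complex_of_real ((cmod (\<psi> q))\<^sup>2)) = 0"
proof -
  define S where "S = {- hbar * \<kappa> <..< hbar * \<kappa>}"
  from ml obtain \<psi>t where "set_borel_measurable lborel S \<psi>t"
    and "set_integrable lborel S (\<lambda>p. (cmod (\<psi>t p))\<^sup>2)"
    and \<psi>_eq: "AE q in lborel. \<psi> q = (LINT p : S | lborel. cis (p * q / hbar) * \<psi>t p)"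
    unfolding momentum_limited_def S_def by blast
  define f where "f p = indicator S p *\<^sub>R \<psi>t p" for p
  have [measurable]: "f \<in> borel_measurable lborel"
    using \<open>set_borel_measurable lborel S \<psi>t\<close> unfolding set_borel_measurable_def f_def .
  have "integrable lborel (indicator S :: real \<Rightarrow> real)"
    by (cases "0 \<le> hbar * \<kappa>") (simp_all add: integrable_indicator_iff S_def)
  then have bound: "integrable lborel (\<lambda>p. indicator S p + indicator S p *\<^sub>R (cmod (\<psi>t p))\<^sup>2 :: real)"
    using \<open>set_integrable lborel S (\<lambda>p. (cmod (\<psi>t p))\<^sup>2)\<close>
    by (intro Bochner_Integration.integrable_add) (simp_all add: set_integrable_def)
  have le_1_plus_sq: "x \<le> 1 + x\<^sup>2" for x :: real
  proof -
    have "2 * x \<le> 1 + x\<^sup>2"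
      using zero_le_square[of "x - 1"] by (simp add: power2_eq_square algebra_simps)
    then show ?thesis
      using zero_le_power2[of x] by linarith
  qed
  have f: "integrable lborel f"
    using le_1_plus_sq
    by (intro Bochner_Integration.integrable_bound[OF bound] AE_I2) (auto simp: f_def indicator_def)
  have supp: "\<bar>p\<bar> < hbar * \<kappa>" if "f p \<noteq> 0" for p
    using that by (auto simp: f_def S_def indicator_def)
  have "(LINT p : S | lborel. cis (p * q / hbar) * \<psi>t p) = fourier_integral (1 / hbar) f q" for q
    unfolding set_lebesgue_integral_def fourier_integral_def
    by (intro Bochner_Integration.integral_cong refl) (simp add: f_def)
  then have \<psi>_eq': "AE q in lborel. \<psi> q = fourier_integral (1 / hbar) f q"
    using \<psi>_eq by simp
  have "(LINT q|lborel. cis (- \<omega> * q) * complex_of_real ((cmod (fourier_integral (1 / hbar) f q))\<^sup>2)) = 0"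
  proof (rule band_limited_intensity_fourier_eq_0[OF _ f supp])
    show "integrable lborel (\<lambda>q. (cmod (fourier_integral (1 / hbar) f q))\<^sup>2)"
      using intensity \<psi>_eq' f
      by (subst integrable_cong_AE[where g = "\<lambda>q. (cmod (\<psi> q))\<^sup>2"])
         (auto elim: AE_mp intro: borel_measurable_integrable)
  qed (use hbar \<omega> in auto)
  moreover have "(LINT q|lborel. cis (- \<omega> * q) * complex_of_real ((cmod (\<psi> q))\<^sup>2))
      = (LINT q|lborel. cis (- \<omega> * q) * complex_of_real ((cmod (fourier_integral (1 / hbar) f q))\<^sup>2))"
    using \<psi>_eq' f by (intro integral_cong_AE) (auto elim: AE_mp)
  ultimately show ?thesis
    by simp
qed

lemma min_gap_pos_le:
  assumes "inj_on a {..<n}" "k < n" "l < n" "k \<noteq> l"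
  shows "0 < min_gap n a" and "min_gap n a \<le> \<bar>a k - a l\<bar>"
proof -
  define G where "G = {a k - a l | k l. k < n \<and> l < n \<and> a l < a k}"
  have "G \<subseteq> (\<lambda>(k, l). a k - a l) ` ({..<n} \<times> {..<n})"
    unfolding G_def by auto
  then have "finite G"
    by (rule finite_subset) auto
  have "a k \<noteq> a l"
    using assms by (auto dest: inj_onD)
  then consider "a l < a k" | "a k < a l"
    by linarith
  then have "\<bar>a k - a l\<bar> \<in> G"
  proof cases
    case 1
    then show ?thesis
      using assms unfolding G_def by auto
  next
    case 2
    then have "\<bar>a k - a l\<bar> = a l - a k"
      by simp
    then show ?thesis
      using assms 2 unfolding G_def by blast
  qed
  moreover have "\<forall>x\<in>G. 0 < x"
    unfolding G_def by auto
  ultimately show "0 < min_gap n a"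
    unfolding min_gap_def G_def[symmetric] using \<open>finite G\<close> by (subst Min_gr_iff) auto
  show "min_gap n a \<le> \<bar>a k - a l\<bar>"
    unfolding min_gap_def G_def[symmetric] using \<open>finite G\<close> \<open>\<bar>a k - a l\<bar> \<in> G\<close> by (rule Min_le)
qed

lemma min_gap_frequency_gt:
  assumes "inj_on a {..<n}" "k < n" "l < n" "k \<noteq> l" and hbar: "hbar > 0" and s: "s > 0"
    and t: "2 * \<kappa> * hbar / (s * min_gap n a) < t"
  shows "2 * \<kappa> < \<bar>s * t / hbar * (a k - a l)\<bar>"
proof -
  note gap = min_gap_pos_le[OF assms(1-4)]
  have "2 * \<kappa> * hbar < t * (s * min_gap n a)"
    using t pos_divide_less_eq[of "s * min_gap n a" "2 * \<kappa> * hbar" t] s gap(1) by simp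
  also have "\<dots> \<le> \<bar>t\<bar> * (s * \<bar>a k - a l\<bar>)"
    using s gap by (intro mult_mono) auto
  finally show ?thesis
    using hbar s by (simp add: abs_mult pos_less_divide_eq mult_ac)
qed

theorem mainTheorem2:
  fixes n :: nat and a :: "nat \<Rightarrow> real" and c :: "nat \<Rightarrow> complex"
    and hbar \<alpha> g0 lam :: real and \<psi>Pr \<Phi>Po :: "real \<Rightarrow> complex"
  assumes nondeg: "inj_on a {..<n}"
    and hbar: "hbar > 0" and alpha: "\<alpha> > 0" and g0: "g0 > 0" and lam: "lam > 0"
    and psi: "normalized_L2 \<psi>Pr" and Phi: "normalized_L2 \<Phi>Po"
  shows
   "(\<forall>\<kappa>0 > 0. momentum_limited hbar \<kappa>0 \<psi>Pr \<longrightarrow>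
       (\<forall>k<n. \<forall>l<n. \<forall>t. k \<noteq> l \<and> t > 2 * \<kappa>0 * hbar / (\<alpha> * g0 * min_gap n a) \<longrightarrow>
          decoh hbar \<alpha> g0 lam \<psi>Pr \<Phi>Po a k l t = 0 \<and> rho_S hbar \<alpha> g0 lam \<psi>Pr \<Phi>Po a c t k l = 0))
  \<and> (\<forall>b0 > 0. momentum_limited hbar b0 \<Phi>Po \<and> lam > 2 * b0 * hbar / min_gap n a \<longrightarrow>
       (\<forall>k<n. \<forall>l<n. \<forall>t > 0. k \<noteq> l \<longrightarrow>
          decoh hbar \<alpha> g0 lam \<psi>Pr \<Phi>Po a k l t = 0 \<and> rho_S hbar \<alpha> g0 lam \<psi>Pr \<Phi>Po a c t k l = 0))"
proof (rule conjI; intro allI impI; elim conjE)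
  fix \<kappa>0 t :: real and k l :: nat
  assume "momentum_limited hbar \<kappa>0 \<psi>Pr" "k < n" "l < n" "k \<noteq> l"
    and "t > 2 * \<kappa>0 * hbar / (\<alpha> * g0 * min_gap n a)"
  then have "2 * \<kappa>0 < \<bar>\<alpha> * g0 * t / hbar * (a k - a l)\<bar>"
    using alpha g0 by (intro min_gap_frequency_gt[OF nondeg _ _ _ hbar]) auto
  then have "(LINT q|lborel. cis (- (\<alpha> * g0 * t / hbar * (a k - a l)) * q)
      * complex_of_real ((cmod (\<psi>Pr q))\<^sup>2)) = 0"
    using \<open>momentum_limited hbar \<kappa>0 \<psi>Pr\<close> psi
    by (intro momentum_limited_intensity_fourier_eq_0[OF hbar]) (auto simp: normalized_L2_def)
  then show "decoh hbar \<alpha> g0 lam \<psi>Pr \<Phi>Po a k l t = 0 \<and> rho_S hbar \<alpha> g0 lam \<psi>Pr \<Phi>Po a c t k l = 0"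
    using \<open>k \<noteq> l\<close> by (simp add: decoh_def rho_S_def mult_ac)
next
  fix b0 t :: real and k l :: nat
  assume "momentum_limited hbar b0 \<Phi>Po" "lam > 2 * b0 * hbar / min_gap n a"
    and "k < n" "l < n" "k \<noteq> l"
  then have "2 * b0 < \<bar>lam / hbar * (a k - a l)\<bar>"
    using min_gap_frequency_gt[OF nondeg _ _ _ hbar zero_less_one, of k l b0 lam] by simp
  then have "(LINT b|lborel. cis (- (lam / hbar * (a k - a l)) * b)
      * complex_of_real ((cmod (\<Phi>Po b))\<^sup>2)) = 0"
    using \<open>momentum_limited hbar b0 \<Phi>Po\<close> Phi
    by (intro momentum_limited_intensity_fourier_eq_0[OF hbar]) (auto simp: normalized_L2_def)
  then show "decoh hbar \<alpha> g0 lam \<psi>Pr \<Phi>Po a k l t = 0 \<and> rho_S hbar \<alpha> g0 lam \<psi>Pr \<Phi>Po a c t k l = 0"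
    using \<open>k \<noteq> l\<close> by (simp add: decoh_def rho_S_def mult_ac)
qed

end
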